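(* Let $K$ be a perfect field, $L/K$ a finite extension, and let $L_1,\dots,L_s$ ($s=s_K(L)$) be the distinct subfields of $\bar K$ isomorphic to $L$ over $K$. Suppose there is a permutation $(i_1,\dots,i_s)$ of $(1,\dots,s)$ such that the tower $K\subseteq L_{i_1}\subseteq L_{i_1}L_{i_2}\subseteq\cdots\subseteq L_{i_1}\cdots L_{i_s}=\tilde L$ consists of $s+1$ distinct fields. Then for each integer $0\le a\le s$ there exists a finite extension $M/K$ with $\rho_K(M,L)=a\cdot r_K(L)$.
   Context: $\bar K$ is a fixed algebraic closure; $\tilde L$ is the Galois closure of $L/K$ in $\bar K$, $G=\mathrm{Gal}(\tilde L/K)$, $H=\mathrm{Gal}(\tilde L/L)$, $s_K(L)=[G:N_G(H)]$, and $r_K(L)=[N_G(H):H]$ (the number of roots of the minimal polynomial $f$ of a primitive element of $L/K$ lying in $L$). For a finite extension $M/K$, $\rho_K(M,L)$ is the number of roots of $f$ lying in $M$. *)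

theory Defs
  imports "HOL-Algebra.Algebraic_Closure" "HOL-Algebra.Generated_Fields"
begin

text \<open>All fields are subfields of a fixed algebraic closure Kbar of K
  (locale algebraic_closure Kbar K).\<close>

definition perfect_field :: "'a ring \<Rightarrow> 'a set \<Rightarrow> bool" where
  "perfect_field Kbar K \<longleftrightarrow>
     (\<forall>p \<in> carrier (univ_poly Kbar K). pirreducible\<^bsub>Kbar\<^esub> K p \<longrightarrow>
        (\<forall>x. count (ring.roots Kbar p) x \<le> 1))"

definition finite_ext :: "'a ring \<Rightarrow> 'a set \<Rightarrow> 'a set \<Rightarrow> bool" where
  "finite_ext Kbar K M \<longleftrightarrow> subfield M Kbar \<and> K \<subseteq> M \<and> ring.finite_dimension Kbar K M"

definition conjugate_fields :: "'a ring \<Rightarrow> 'a set \<Rightarrow> 'a set \<Rightarrow> 'a set set" where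
  "conjugate_fields Kbar K L =
     {\<sigma> ` L | \<sigma>. \<sigma> \<in> ring_hom (Kbar\<lparr>carrier := L\<rparr>) Kbar \<and> (\<forall>k \<in> K. \<sigma> k = k)}"

definition s_K :: "'a ring \<Rightarrow> 'a set \<Rightarrow> 'a set \<Rightarrow> nat" where
  "s_K Kbar K L = card (conjugate_fields Kbar K L)"

text \<open>rho_K(M,L) for L = K(alpha): the number of roots of the minimal polynomial
  f = Irr K alpha lying in M.\<close>
definition rho_K :: "'a ring \<Rightarrow> 'a set \<Rightarrow> 'a \<Rightarrow> 'a set \<Rightarrow> nat" where
  "rho_K Kbar K \<alpha> M = card {x \<in> M. ring.eval Kbar (ring.Irr Kbar K \<alpha>) x = \<zero>\<^bsub>Kbar\<^esub>}"

definition r_K :: "'a ring \<Rightarrow> 'a set \<Rightarrow> 'a \<Rightarrow> 'a set \<Rightarrow> nat" where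
  "r_K Kbar K \<alpha> L = rho_K Kbar K \<alpha> L"

definition tower :: "'a ring \<Rightarrow> 'a set \<Rightarrow> (nat \<Rightarrow> 'a set) \<Rightarrow> nat \<Rightarrow> 'a set" where
  "tower Kbar K Ls j = (if j = 0 then K else generate_field Kbar (\<Union>i \<in> {1..j}. Ls i))"

end

theory Submission
  imports Defs
begin

text \<open>Write L = K(\<alpha>) and f for the minimal polynomial of \<alpha>. The conjugate fields of L
  are the fields K(\<beta>) for the roots \<beta> of f; each contains as many roots of f as L does,
  namely r_K(L), and a root of f lying in K(\<beta>) already generates K(\<beta>), so distinct conjugate
  fields share no root. If the tower K \<subseteq> L_1 \<subseteq> L_1 L_2 \<subseteq> ... is strict, then L_c is not
  contained in the stage T_a = L_1 ... L_a for c > a. A root \<beta> of f in T_a gives the conjugate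
  field K(\<beta>) \<subseteq> T_a, which must therefore be one of L_1, ..., L_a; hence T_a contains exactly
  a \<cdot> r_K(L) roots of f.\<close>

section \<open>Conjugates and embeddings over a subfield\<close>

definition (in ring) conjugates :: "'a set \<Rightarrow> 'a \<Rightarrow> 'a set" where
  "conjugates K a = {b \<in> carrier R. eval (Irr K a) b = \<zero>}"

definition (in ring) embeddings_over :: "'a set \<Rightarrow> 'a set \<Rightarrow> ('a \<Rightarrow> 'a) set" where
  "embeddings_over K F = {h \<in> ring_hom (R\<lparr>carrier := F\<rparr>) R. \<forall>k \<in> K. h k = k}"

text \<open>Maps p(a) to p(b) for polynomials p over K; well defined on K(a) when b is a conjugate of a,
  since a and b have the same minimal polynomial.\<close>
definition (in ring) conjugate_embedding :: "'a set \<Rightarrow> 'a \<Rightarrow> 'a \<Rightarrow> 'a \<Rightarrow> 'a" where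
  "conjugate_embedding K a b y = eval (SOME p. p \<in> carrier (K[X]) \<and> eval p a = y) b"

lemma rho_K_eq_card_conjugates:
  fixes R :: "'a ring"
  assumes "ring R" "M \<subseteq> carrier R"
  shows "rho_K R K a M = card (M \<inter> ring.conjugates R K a)"
  unfolding rho_K_def ring.conjugates_def[OF assms(1)] using assms(2)
  by (intro arg_cong[where f = card]) blast

lemma conjugate_fields_eq:
  fixes R :: "'a ring"
  assumes "ring R"
  shows "conjugate_fields R K F = (\<lambda>h. h ` F) ` ring.embeddings_over R K F"
  unfolding conjugate_fields_def ring.embeddings_over_def[OF assms] by auto

context ring
begin

lemma embeddings_over_ring_hom_ring:
  assumes "subring F R" "h \<in> embeddings_over K F"
  shows "ring_hom_ring (R\<lparr>carrier := F\<rparr>) R h"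
  using ring_hom_ringI2[OF subring_is_ring[OF assms(1)] ring_axioms] assms(2)
  unfolding embeddings_over_def by simp

lemma eval_in_subring:
  assumes "subring F R" "K \<subseteq> F" "p \<in> carrier (K[X])" "x \<in> F"
  shows "eval p x \<in> F"
proof -
  have "set p \<subseteq> F"
    using polynomial_incl assms(2,3) univ_poly_carrier by blast
  then show ?thesis
    using ring.eval_in_carrier[OF subring_is_ring[OF assms(1)]] assms(4) eval_consistent[OF assms(1)]
    by simp
qed

lemma embedding_over_eval:
  assumes "subring F R" "K \<subseteq> F" "h \<in> embeddings_over K F" "x \<in> F" "p \<in> carrier (K[X])"
  shows "h (eval p x) = eval p (h x)"
proof -
  interpret H: ring_hom_ring "R\<lparr>carrier := F\<rparr>" R h
    using embeddings_over_ring_hom_ring[OF assms(1,3)] .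
  have p: "set p \<subseteq> K"
    using polynomial_incl assms(5) univ_poly_carrier by blast
  then have "map h p = p"
    using assms(3) unfolding embeddings_over_def by (induct p) auto
  moreover have "h (ring.eval (R\<lparr>carrier := F\<rparr>) p x) = eval (map h p) (h x)"
    using H.eval_hom'[of x p] assms(2,4) p by auto
  ultimately show ?thesis
    using eval_consistent[OF assms(1)] by simp
qed

end

context field
begin

lemma embedding_over_inj:
  assumes "subfield F R" "h \<in> embeddings_over K F"
  shows "inj_on h F"
  using non_trivial_field_hom_is_inj[OF _ subfield_iff(2)[OF assms(1)] field_axioms] assms(2)
  unfolding embeddings_over_def by simp

context
  fixes K :: "'a set"
  assumes K: "subfield K R"
begin

lemma Irr_ne_Nil:
  assumes "a \<in> carrier R" "(algebraic over K) a"
  shows "Irr K a \<noteq> []"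
  using pirreducibleE(1)[OF subfieldE(1)[OF K] IrrE(1,2)[OF K assms]] .

lemma conjugates_algebraic:
  assumes "a \<in> carrier R" "(algebraic over K) a" "b \<in> conjugates K a"
  shows "(algebraic over K) b"
  using algebraicI[OF IrrE(1)[OF K assms(1,2)] Irr_ne_Nil[OF assms(1,2)]] assms(3)
  unfolding conjugates_def by auto

lemma Irr_conjugate:
  assumes "a \<in> carrier R" "(algebraic over K) a" "b \<in> conjugates K a"
  shows "Irr K b = Irr K a"
proof -
  have b: "b \<in> carrier R" "(algebraic over K) b"
    using assms conjugates_algebraic unfolding conjugates_def by auto
  have "Irr K a \<in> carrier (K[X]) \<and> pirreducible K (Irr K a) \<and> eval (Irr K a) b = \<zero>
      \<and> lead_coeff (Irr K a) = \<one>"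
    using IrrE[OF K assms(1,2)] assms(3) unfolding conjugates_def by auto
  then show ?thesis
    unfolding Irr_def[of K b] by (intro the1_equality minimal_polynomial_is_unique[OF K b])
qed

lemma eval_eq_at_conjugate:
  assumes "a \<in> carrier R" "(algebraic over K) a" "b \<in> conjugates K a"
    and "p \<in> carrier (K[X])" "q \<in> carrier (K[X])" "eval p a = eval q a"
  shows "eval p b = eval q b"
proof -
  have b: "b \<in> carrier R" "(algebraic over K) b"
    using assms conjugates_algebraic unfolding conjugates_def by auto
  interpret A: ring_hom_cring "K[X]" R "\<lambda>p. eval p a"
    using eval_cring_hom[OF subfieldE(1)[OF K] assms(1)] .
  interpret B: ring_hom_cring "K[X]" R "\<lambda>p. eval p b"
    using eval_cring_hom[OF subfieldE(1)[OF K] b(1)] .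
  have same_kernel: "a_kernel (K[X]) R (\<lambda>p. eval p b) = a_kernel (K[X]) R (\<lambda>p. eval p a)"
    using Irr_generates_ker[OF K assms(1,2)] Irr_generates_ker[OF K b] Irr_conjugate[OF assms(1-3)]
    by simp
  let ?d = "p \<ominus>\<^bsub>K[X]\<^esub> q"
  have "eval ?d a = \<zero>"
    using assms(4-6) by (simp add: a_minus_def r_neg)
  then have "?d \<in> a_kernel (K[X]) R (\<lambda>p. eval p a)"
    using assms(4,5) unfolding a_kernel_def' by simp
  then have "?d \<in> a_kernel (K[X]) R (\<lambda>p. eval p b)"
    using same_kernel by simp
  then have "eval ?d b = \<zero>"
    unfolding a_kernel_def' by simp
  then have "eval p b \<ominus> eval q b = \<zero>"
    using assms(4,5) by (simp add: a_minus_def)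
  then show ?thesis
    using assms(4,5) B.hom_closed by simp
qed

lemma conjugate_embedding_eval:
  assumes "a \<in> carrier R" "(algebraic over K) a" "b \<in> conjugates K a" "p \<in> carrier (K[X])"
  shows "conjugate_embedding K a b (eval p a) = eval p b"
proof -
  let ?P = "\<lambda>q. q \<in> carrier (K[X]) \<and> eval q a = eval p a"
  have "?P (SOME q. ?P q)"
    using someI[of ?P p] assms(4) by auto
  then show ?thesis
    unfolding conjugate_embedding_def using eval_eq_at_conjugate[OF assms(1-3) _ assms(4)] by auto
qed

lemma conjugate_embedding_ring_hom:
  assumes "a \<in> carrier R" "(algebraic over K) a" "b \<in> conjugates K a"
  shows "conjugate_embedding K a b \<in> ring_hom (R\<lparr>carrier := simple_extension K a\<rparr>) R"
proof -
  have b: "b \<in> carrier R"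
    using assms(3) unfolding conjugates_def by simp
  interpret A: ring_hom_cring "K[X]" R "\<lambda>p. eval p a"
    using eval_cring_hom[OF subfieldE(1)[OF K] assms(1)] .
  interpret B: ring_hom_cring "K[X]" R "\<lambda>p. eval p b"
    using eval_cring_hom[OF subfieldE(1)[OF K] b] .
  note img = simple_extension_as_eval_img[OF subfieldE(3)[OF K] assms(1)]
  note E = conjugate_embedding_eval[OF assms]
  show ?thesis
  proof (rule ring_hom_memI)
    fix x assume "x \<in> carrier (R\<lparr>carrier := simple_extension K a\<rparr>)"
    then show "conjugate_embedding K a b x \<in> carrier R"
      using img E by auto
  next
    fix x y assume "x \<in> carrier (R\<lparr>carrier := simple_extension K a\<rparr>)"
      "y \<in> carrier (R\<lparr>carrier := simple_extension K a\<rparr>)"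
    then obtain p q where p: "p \<in> carrier (K[X])" "x = eval p a"
      and q: "q \<in> carrier (K[X])" "y = eval q a"
      using img by auto
    show "conjugate_embedding K a b (x \<otimes>\<^bsub>R\<lparr>carrier := simple_extension K a\<rparr>\<^esub> y)
        = conjugate_embedding K a b x \<otimes> conjugate_embedding K a b y"
      and "conjugate_embedding K a b (x \<oplus>\<^bsub>R\<lparr>carrier := simple_extension K a\<rparr>\<^esub> y)
        = conjugate_embedding K a b x \<oplus> conjugate_embedding K a b y"
      using E[of "p \<otimes>\<^bsub>K[X]\<^esub> q"] E[of "p \<oplus>\<^bsub>K[X]\<^esub> q"] E p q by simp_all
  next
    show "conjugate_embedding K a b \<one>\<^bsub>R\<lparr>carrier := simple_extension K a\<rparr>\<^esub> = \<one>"
      using E[of "\<one>\<^bsub>K[X]\<^esub>"] by simp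
  qed
qed

lemma conjugate_embedding_fixes_base:
  assumes "a \<in> carrier R" "(algebraic over K) a" "b \<in> conjugates K a" "k \<in> K"
  shows "conjugate_embedding K a b k = k"
proof -
  have "poly_of_const k \<in> carrier (K[X])"
    using ring_hom_memE(1)[OF canonical_embedding_is_hom[OF subfieldE(1)[OF K]]] assms(4) by simp
  moreover have "eval (poly_of_const k) x = k" if "x \<in> carrier R" for x
    using subfieldE(3)[OF K] assms(4) that by (auto simp: poly_of_const_def)
  ultimately show ?thesis
    using conjugate_embedding_eval[OF assms(1-3)] assms(1,3) unfolding conjugates_def by force
qed

lemma conjugate_embedding_in_embeddings_over:
  assumes "a \<in> carrier R" "(algebraic over K) a" "b \<in> conjugates K a"
  shows "conjugate_embedding K a b \<in> embeddings_over K (simple_extension K a)"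
  using conjugate_embedding_ring_hom[OF assms] conjugate_embedding_fixes_base[OF assms]
  unfolding embeddings_over_def by simp

lemma conjugate_embedding_generator:
  assumes "a \<in> carrier R" "(algebraic over K) a" "b \<in> conjugates K a"
  shows "conjugate_embedding K a b a = b"
  using conjugate_embedding_eval[OF assms var_closed(1)[OF subfieldE(1)[OF K]]] eval_var assms
  unfolding conjugates_def by simp

lemma embedding_over_image_conjugates:
  assumes "subfield F R" "K \<subseteq> F" "h \<in> embeddings_over K F"
    and "a \<in> carrier R" "(algebraic over K) a"
  shows "h ` (F \<inter> conjugates K a) = h ` F \<inter> conjugates K a"
proof -
  have F: "subring F R" "F \<subseteq> carrier R"
    using assms(1) subfieldE(1,3) by auto
  interpret H: ring_hom_ring "R\<lparr>carrier := F\<rparr>" R h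
    using embeddings_over_ring_hom_ring[OF F(1) assms(3)] .
  have Irr: "Irr K a \<in> carrier (K[X])"
    using IrrE(1)[OF K assms(4,5)] .
  have "h y \<in> conjugates K a \<longleftrightarrow> y \<in> conjugates K a" if y: "y \<in> F" for y
  proof -
    have "eval (Irr K a) (h y) = h (eval (Irr K a) y)"
      using embedding_over_eval[OF F(1) assms(2,3) y Irr] by simp
    moreover have "h (eval (Irr K a) y) = h \<zero> \<longleftrightarrow> eval (Irr K a) y = \<zero>"
      using inj_on_eq_iff[OF embedding_over_inj[OF assms(1,3)]]
        eval_in_subring[OF F(1) assms(2) Irr y] subringE(2)[OF F(1)] by blast
    moreover have "h \<zero> = \<zero>" "h y \<in> carrier R"
      using H.hom_zero H.hom_closed y by simp_all
    ultimately show ?thesis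
      using F(2) y unfolding conjugates_def by auto
  qed
  then show ?thesis
    by blast
qed

lemma embedding_over_simple_extension:
  assumes "a \<in> carrier R" "(algebraic over K) a" "h \<in> embeddings_over K (simple_extension K a)"
  shows "h a \<in> conjugates K a" and "h ` simple_extension K a = simple_extension K (h a)"
proof -
  have K_sub: "K \<subseteq> carrier R"
    using subfieldE(3)[OF K] .
  have F: "subring (simple_extension K a) R" "K \<subseteq> simple_extension K a" "a \<in> simple_extension K a"
    using simple_extension_is_subring[OF subfieldE(1)[OF K] assms(1)]
      simple_extension_incl[OF K_sub assms(1)] simple_extension_mem[OF subfieldE(1)[OF K] assms(1)] .
  interpret H: ring_hom_ring "R\<lparr>carrier := simple_extension K a\<rparr>" R h
    using embeddings_over_ring_hom_ring[OF F(1) assms(3)] .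
  note eval_h = embedding_over_eval[OF F(1,2) assms(3) F(3)]
  have ha: "h a \<in> carrier R"
    using H.hom_closed F(3) by simp
  show "h a \<in> conjugates K a"
    using eval_h[OF IrrE(1)[OF K assms(1,2)]] IrrE(4)[OF K assms(1,2)] H.hom_zero ha
    unfolding conjugates_def by simp
  show "h ` simple_extension K a = simple_extension K (h a)"
    unfolding simple_extension_as_eval_img[OF K_sub assms(1)] simple_extension_as_eval_img[OF K_sub ha]
      image_image using eval_h by simp
qed

lemma conjugate_images_simple_extension:
  assumes "a \<in> carrier R" "(algebraic over K) a"
  shows "(\<lambda>h. h ` simple_extension K a) ` embeddings_over K (simple_extension K a)
       = simple_extension K ` conjugates K a"
proof
  show "(\<lambda>h. h ` simple_extension K a) ` embeddings_over K (simple_extension K a)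
      \<subseteq> simple_extension K ` conjugates K a"
    using embedding_over_simple_extension[OF assms] by auto
  show "simple_extension K ` conjugates K a
      \<subseteq> (\<lambda>h. h ` simple_extension K a) ` embeddings_over K (simple_extension K a)"
  proof
    fix F assume "F \<in> simple_extension K ` conjugates K a"
    then obtain b where b: "b \<in> conjugates K a" "F = simple_extension K b"
      by blast
    note h = conjugate_embedding_in_embeddings_over[OF assms b(1)]
    have "F = conjugate_embedding K a b ` simple_extension K a"
      using embedding_over_simple_extension(2)[OF assms h]
        conjugate_embedding_generator[OF assms b(1)] b(2) by simp
    then show "F \<in> (\<lambda>h. h ` simple_extension K a) ` embeddings_over K (simple_extension K a)"
      using h by blast
  qed
qed

lemma simple_extension_intermediate_field:
  assumes "x \<in> carrier R" "(algebraic over K) x"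
  shows "subfield (simple_extension K x) R" "K \<subseteq> simple_extension K x" "x \<in> simple_extension K x"
  using simple_extension_is_subfield[OF K assms(1)] assms(2)
    simple_extension_incl[OF subfieldE(3)[OF K] assms(1)]
    simple_extension_mem[OF subfieldE(1)[OF K] assms(1)] by auto

lemma finite_conjugates:
  assumes "a \<in> carrier R" "(algebraic over K) a"
  shows "finite (conjugates K a)"
proof -
  have "Irr K a \<in> carrier (poly_ring R)"
    using carrier_polynomial[OF subfieldE(1)[OF K]] IrrE(1)[OF K assms] univ_poly_carrier by blast
  moreover have "conjugates K a = {x. is_root (Irr K a) x}"
    using Irr_ne_Nil[OF assms] unfolding conjugates_def is_root_def by auto
  ultimately show ?thesis
    using finite_number_of_roots by simp
qed

lemma card_conjugates_in_conjugate_simple_extension: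
  assumes "a \<in> carrier R" "(algebraic over K) a" "b \<in> conjugates K a"
  shows "card (simple_extension K b \<inter> conjugates K a) = card (simple_extension K a \<inter> conjugates K a)"
proof -
  let ?h = "conjugate_embedding K a b"
  note F = simple_extension_intermediate_field[OF assms(1,2)]
  note h = conjugate_embedding_in_embeddings_over[OF assms]
  have "?h ` (simple_extension K a \<inter> conjugates K a) = simple_extension K b \<inter> conjugates K a"
    using embedding_over_image_conjugates[OF F(1,2) h assms(1,2)]
      embedding_over_simple_extension(2)[OF assms(1,2) h] conjugate_embedding_generator[OF assms]
    by simp
  moreover have "inj_on ?h (simple_extension K a \<inter> conjugates K a)"
    using embedding_over_inj[OF F(1) h] inj_on_subset by blast
  ultimately show ?thesis
    using card_image by metis
qed

text \<open>K(c) \<subseteq> K(b) contain equally many conjugates of a, so b already lies in K(c).\<close>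
lemma simple_extension_conjugate_eq:
  assumes "a \<in> carrier R" "(algebraic over K) a" "b \<in> conjugates K a"
    and "c \<in> simple_extension K b \<inter> conjugates K a"
  shows "simple_extension K c = simple_extension K b"
proof -
  have b: "b \<in> carrier R" "(algebraic over K) b"
    using assms(1-3) conjugates_algebraic unfolding conjugates_def by auto
  have c: "c \<in> carrier R" "(algebraic over K) c" "c \<in> conjugates K a"
    using assms conjugates_algebraic unfolding conjugates_def by auto
  note Fb = simple_extension_intermediate_field[OF b]
  note Fc = simple_extension_intermediate_field[OF c(1,2)]
  have c_sub_b: "simple_extension K c \<subseteq> simple_extension K b"
    using simple_extension_subring_incl[OF subfieldE(1)[OF Fb(1)] Fb(2)] assms(4) by blast
  have "simple_extension K c \<inter> conjugates K a = simple_extension K b \<inter> conjugates K a"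
  proof (rule card_subset_eq)
    show "finite (simple_extension K b \<inter> conjugates K a)"
      using finite_conjugates[OF assms(1,2)] by simp
    show "simple_extension K c \<inter> conjugates K a \<subseteq> simple_extension K b \<inter> conjugates K a"
      using c_sub_b by blast
    show "card (simple_extension K c \<inter> conjugates K a) = card (simple_extension K b \<inter> conjugates K a)"
      using card_conjugates_in_conjugate_simple_extension[OF assms(1,2)] assms(3) c(3) by simp
  qed
  then have "b \<in> simple_extension K c"
    using Fb(3) assms(3) by blast
  then have "simple_extension K b \<subseteq> simple_extension K c"
    using simple_extension_subring_incl[OF subfieldE(1)[OF Fc(1)] Fc(2)] by blast
  then show ?thesis
    using c_sub_b by blast
qed

lemma generate_field_insert_eq_simple_extension:
  assumes "x \<in> carrier R" "(algebraic over K) x"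
  shows "generate_field R (insert x K) = simple_extension K x"
proof
  note F = simple_extension_intermediate_field[OF assms]
  have ins: "insert x K \<subseteq> carrier R"
    using assms(1) subfieldE(3)[OF K] by auto
  show "generate_field R (insert x K) \<subseteq> simple_extension K x"
    using generate_field_min_subfield1[OF ins F(1)] F(2,3) by blast
  show "simple_extension K x \<subseteq> generate_field R (insert x K)"
    using simple_extension_subring_incl[OF subfieldE(1)[OF generate_field_is_subfield[OF ins]]]
      generate_fieldE(2)[OF ins refl] by blast
qed

end

end

lemma conjugate_fields_simple_extension:
  fixes R :: "'a ring"
  assumes "field R" "subfield K R" "a \<in> carrier R" "(ring.algebraic R over K) a"
  shows "conjugate_fields R K (ring.simple_extension R K a)
       = ring.simple_extension R K ` ring.conjugates R K a"
proof -
  interpret field R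
    by fact
  show ?thesis
    using conjugate_fields_eq[OF ring_axioms] conjugate_images_simple_extension[OF assms(2-4)] by simp
qed

section \<open>Towers of composita\<close>

locale intermediate_field_sequence = field R for R :: "'a ring" (structure) +
  fixes K :: "'a set" and Ls :: "nat \<Rightarrow> 'a set" and n :: nat
  assumes base_subfield: "subfield K R"
    and layer_subfield: "i \<in> {1..n} \<Longrightarrow> subfield (Ls i) R"
    and base_subset_layer: "i \<in> {1..n} \<Longrightarrow> K \<subseteq> Ls i"
begin

lemma layers_subset_carrier:
  assumes "j \<le> n"
  shows "(\<Union>i\<in>{1..j}. Ls i) \<subseteq> carrier R"
  using layer_subfield subfieldE(3) assms by force

lemma tower_subfield:
  assumes "j \<le> n"
  shows "subfield (tower R K Ls j) R"
  using base_subfield generate_field_is_subfield[OF layers_subset_carrier[OF assms]]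
  unfolding tower_def by simp

lemma tower_subset_iff:
  assumes "j \<le> n" "subfield M R" "K \<subseteq> M"
  shows "tower R K Ls j \<subseteq> M \<longleftrightarrow> (\<forall>i\<in>{1..j}. Ls i \<subseteq> M)"
proof (cases "j = 0")
  case True
  then show ?thesis
    using assms(3) unfolding tower_def by simp
next
  case False
  note gen = generate_fieldE[OF layers_subset_carrier[OF assms(1)] refl]
  show ?thesis
    using False gen(2) gen(3)[OF assms(2)] unfolding tower_def by auto
qed

lemma layer_subset_tower:
  assumes "i \<in> {1..j}" "j \<le> n"
  shows "Ls i \<subseteq> tower R K Ls j"
proof -
  have "Ls i \<subseteq> (\<Union>i\<in>{1..j}. Ls i)"
    using assms(1) by blast
  then show ?thesis
    using generate_fieldE(2)[OF layers_subset_carrier[OF assms(2)] refl] assms(1)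
    unfolding tower_def by auto
qed

lemma base_subset_tower:
  assumes "j \<le> n"
  shows "K \<subseteq> tower R K Ls j"
proof (cases "j = 0")
  case True
  then show ?thesis
    unfolding tower_def by simp
next
  case False
  then show ?thesis
    using base_subset_layer[of 1] layer_subset_tower[of 1 j] assms by auto
qed

lemma tower_mono:
  assumes "j \<le> k" "k \<le> n"
  shows "tower R K Ls j \<subseteq> tower R K Ls k"
  using tower_subset_iff[OF _ tower_subfield base_subset_tower] layer_subset_tower assms by auto

text \<open>Otherwise adjoining L_c to the stage c - 1 would not enlarge it, against strictness.\<close>
lemma layer_not_subset_lower_tower:
  assumes "inj_on (tower R K Ls) {0..n}" "j < c" "c \<le> n"
  shows "\<not> Ls c \<subseteq> tower R K Ls j"
proof
  assume "Ls c \<subseteq> tower R K Ls j"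
  moreover have "tower R K Ls j \<subseteq> tower R K Ls (c - 1)"
    using tower_mono assms(2,3) by simp
  ultimately have "Ls c \<subseteq> tower R K Ls (c - 1)"
    by blast
  moreover have "Ls i \<subseteq> tower R K Ls (c - 1)" if "i \<in> {1..c}" "i \<noteq> c" for i
  proof -
    have "i \<in> {1..c - 1}"
      using that by auto
    then show ?thesis
      using layer_subset_tower[of i "c - 1"] assms(3) by simp
  qed
  ultimately have "\<forall>i\<in>{1..c}. Ls i \<subseteq> tower R K Ls (c - 1)"
    by blast
  then have "tower R K Ls c \<subseteq> tower R K Ls (c - 1)"
    using tower_subset_iff[OF assms(3) tower_subfield base_subset_tower] assms(3) by simp
  then have "tower R K Ls c = tower R K Ls (c - 1)"
    using tower_mono[of "c - 1" c] assms(3) by auto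
  then have "c = c - 1"
    using inj_onD[OF assms(1)] assms(3) by simp
  then show False
    using assms(2) by simp
qed

end

section \<open>Counting conjugates along a strict tower\<close>

locale conjugate_field_enumeration = field R for R :: "'a ring" (structure) +
  fixes K :: "'a set" and \<alpha> :: 'a and Ls :: "nat \<Rightarrow> 'a set" and n :: nat
  assumes base_subfield: "subfield K R"
    and generator: "\<alpha> \<in> carrier R" "(algebraic over K) \<alpha>"
    and enumeration: "bij_betw Ls {1..n} (conjugate_fields R K (simple_extension K \<alpha>))"
begin

lemma layer_eq_simple_extension:
  assumes "i \<in> {1..n}"
  obtains b where "b \<in> conjugates K \<alpha>" "Ls i = simple_extension K b"
proof -
  have "Ls i \<in> simple_extension K ` conjugates K \<alpha>"
    using bij_betwE[OF enumeration] assms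
      conjugate_fields_simple_extension[OF field_axioms base_subfield generator] by simp
  then show ?thesis
    using that by blast
qed

lemma layer_generated_by_conjugate:
  assumes "i \<in> {1..n}" "x \<in> Ls i \<inter> conjugates K \<alpha>"
  shows "Ls i = simple_extension K x"
proof -
  obtain b where "b \<in> conjugates K \<alpha>" "Ls i = simple_extension K b"
    using layer_eq_simple_extension[OF assms(1)] .
  then show ?thesis
    using simple_extension_conjugate_eq[OF base_subfield generator] assms(2) by simp
qed

lemma layer_intermediate_field:
  assumes "i \<in> {1..n}"
  shows "subfield (Ls i) R" "K \<subseteq> Ls i"
proof -
  obtain b where b: "b \<in> conjugates K \<alpha>" "Ls i = simple_extension K b"
    using layer_eq_simple_extension[OF assms] .
  then have "b \<in> carrier R" "(algebraic over K) b"
    using conjugates_algebraic[OF base_subfield generator] unfolding conjugates_def by auto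
  then show "subfield (Ls i) R" "K \<subseteq> Ls i"
    using simple_extension_intermediate_field[OF base_subfield] b(2) by simp_all
qed

sublocale intermediate_field_sequence R K Ls n
  by (simp add: intermediate_field_sequence_def intermediate_field_sequence_axioms_def field_axioms
      base_subfield layer_intermediate_field)

lemma card_conjugates_in_layer:
  assumes "i \<in> {1..n}"
  shows "card (Ls i \<inter> conjugates K \<alpha>) = card (simple_extension K \<alpha> \<inter> conjugates K \<alpha>)"
  using layer_eq_simple_extension[OF assms]
    card_conjugates_in_conjugate_simple_extension[OF base_subfield generator] by metis

lemma conjugates_in_tower:
  assumes "inj_on (tower R K Ls) {0..n}" "j \<le> n"
  shows "tower R K Ls j \<inter> conjugates K \<alpha> = (\<Union>c\<in>{1..j}. Ls c \<inter> conjugates K \<alpha>)"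
proof
  show "(\<Union>c\<in>{1..j}. Ls c \<inter> conjugates K \<alpha>) \<subseteq> tower R K Ls j \<inter> conjugates K \<alpha>"
    using layer_subset_tower assms(2) by blast
  show "tower R K Ls j \<inter> conjugates K \<alpha> \<subseteq> (\<Union>c\<in>{1..j}. Ls c \<inter> conjugates K \<alpha>)"
  proof
    fix x assume x: "x \<in> tower R K Ls j \<inter> conjugates K \<alpha>"
    then have "x \<in> carrier R" "(algebraic over K) x"
      using conjugates_algebraic[OF base_subfield generator] unfolding conjugates_def by auto
    note Fx = simple_extension_intermediate_field[OF base_subfield this]
    have "simple_extension K x \<in> conjugate_fields R K (simple_extension K \<alpha>)"
      using conjugate_fields_simple_extension[OF field_axioms base_subfield generator] x by blast
    then obtain c where c: "c \<in> {1..n}" "Ls c = simple_extension K x"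
      using enumeration unfolding bij_betw_def by (metis imageE)
    have "simple_extension K x \<subseteq> tower R K Ls j"
      using simple_extension_subring_incl[OF subfieldE(1)[OF tower_subfield] base_subset_tower]
        x assms(2) by blast
    then have "c \<le> j"
      using layer_not_subset_lower_tower[OF assms(1), of j c] c by fastforce
    then show "x \<in> (\<Union>c\<in>{1..j}. Ls c \<inter> conjugates K \<alpha>)"
      using c Fx(3) x by auto
  qed
qed

lemma layers_share_no_conjugate:
  assumes "c \<in> {1..n}" "d \<in> {1..n}" "c \<noteq> d"
  shows "(Ls c \<inter> conjugates K \<alpha>) \<inter> (Ls d \<inter> conjugates K \<alpha>) = {}"
proof -
  have "Ls c \<noteq> Ls d"
    using inj_onD[OF bij_betw_imp_inj_on[OF enumeration]] assms by blast
  then show ?thesis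
    using layer_generated_by_conjugate[OF assms(1)] layer_generated_by_conjugate[OF assms(2)] by blast
qed

lemma card_conjugates_in_tower:
  assumes "inj_on (tower R K Ls) {0..n}" "j \<le> n"
  shows "card (tower R K Ls j \<inter> conjugates K \<alpha>)
       = j * card (simple_extension K \<alpha> \<inter> conjugates K \<alpha>)"
proof -
  have "card (\<Union>c\<in>{1..j}. Ls c \<inter> conjugates K \<alpha>)
      = (\<Sum>c\<in>{1..j}. card (Ls c \<inter> conjugates K \<alpha>))"
  proof (rule card_UN_disjoint)
    show "\<forall>c\<in>{1..j}. finite (Ls c \<inter> conjugates K \<alpha>)"
      using finite_conjugates[OF base_subfield generator] by simp
  qed (use layers_share_no_conjugate assms(2) in auto)
  then show ?thesis
    using conjugates_in_tower[OF assms] card_conjugates_in_layer assms(2) by simp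
qed

lemma tower_finite_dimension:
  assumes "j \<le> n"
  shows "finite_dimension K (tower R K Ls j)"
proof -
  obtain xs where xs: "set xs = tower R K Ls j \<inter> conjugates K \<alpha>"
    using finite_list finite_conjugates[OF base_subfield generator] by (metis finite_Int)
  have xs_carrier: "set xs \<subseteq> carrier R"
    using xs unfolding conjugates_def by auto
  have xs_algebraic: "\<And>x. x \<in> set xs \<Longrightarrow> (algebraic over K) x"
    using xs conjugates_algebraic[OF base_subfield generator] by auto
  note M = finite_extension_is_subfield[OF base_subfield xs_carrier xs_algebraic]
    finite_extension_incl[OF subfieldE(3)[OF base_subfield] xs_carrier]
  have "Ls c \<subseteq> finite_extension K xs" if "c \<in> {1..j}" for c
  proof -
    have "c \<in> {1..n}"
      using that assms by simp
    then obtain b where b: "b \<in> conjugates K \<alpha>" "Ls c = simple_extension K b"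
      by (rule layer_eq_simple_extension)
    then have "b \<in> Ls c"
      using simple_extension_intermediate_field(3)[OF base_subfield]
        conjugates_algebraic[OF base_subfield generator] unfolding conjugates_def by auto
    then have "b \<in> set xs"
      using xs b(1) layer_subset_tower[OF that assms] by auto
    then show ?thesis
      using b(2) simple_extension_subring_incl[OF subfieldE(1)[OF M(1)] M(2)]
        finite_extension_mem[OF subfieldE(1)[OF base_subfield] xs_carrier] by blast
  qed
  then have "tower R K Ls j \<subseteq> finite_extension K xs"
    using tower_subset_iff[OF assms M] by blast
  moreover have "finite_extension K xs \<subseteq> tower R K Ls j"
    using finite_extension_subring_incl[OF subfieldE(1)[OF tower_subfield[OF assms]]
        base_subset_tower[OF assms]] xs by blast
  ultimately show ?thesis
    using finite_extension_finite_dimension(1)[OF base_subfield xs_carrier xs_algebraic] by auto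
qed

end

theorem mainTheorem18:
  fixes Kbar :: "'a ring" and K L :: "'a set" and \<alpha> :: 'a
  assumes "algebraic_closure Kbar K"
    and "perfect_field Kbar K"
    and "finite_ext Kbar K L"
    and "\<alpha> \<in> L" and "generate_field Kbar (insert \<alpha> K) = L"
    and "\<exists>Ls. bij_betw Ls {1..s_K Kbar K L} (conjugate_fields Kbar K L)
              \<and> inj_on (tower Kbar K Ls) {0..s_K Kbar K L}"
  shows "\<forall>a::nat. a \<le> s_K Kbar K L \<longrightarrow>
           (\<exists>M. finite_ext Kbar K M \<and> rho_K Kbar K \<alpha> M = a * r_K Kbar K \<alpha> L)"
proof (intro allI impI)
  fix a assume a: "a \<le> s_K Kbar K L"
  interpret algebraic_closure Kbar K
    by fact
  have \<alpha>: "\<alpha> \<in> carrier Kbar" "(algebraic over K) \<alpha>"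
    using assms(3,4) algebraic_extension subfieldE(3) unfolding finite_ext_def by auto
  have L: "L = simple_extension K \<alpha>"
    using generate_field_insert_eq_simple_extension[OF subfield_axioms \<alpha>] assms(5) by simp
  obtain Ls where Ls: "bij_betw Ls {1..s_K Kbar K L} (conjugate_fields Kbar K L)"
    and inj: "inj_on (tower Kbar K Ls) {0..s_K Kbar K L}"
    using assms(6) by blast
  interpret conjugate_field_enumeration Kbar K \<alpha> Ls "s_K Kbar K L"
    using Ls L \<alpha> by unfold_locales simp_all
  have "finite_ext Kbar K (tower Kbar K Ls a)"
    using tower_subfield[OF a] base_subset_tower[OF a] tower_finite_dimension[OF a]
    unfolding finite_ext_def by simp
  moreover have "rho_K Kbar K \<alpha> (tower Kbar K Ls a) = a * r_K Kbar K \<alpha> L"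
    using card_conjugates_in_tower[OF inj a] rho_K_eq_card_conjugates[OF ring_axioms]
      subfieldE(3)[OF tower_subfield[OF a]]
      subfieldE(3)[OF simple_extension_intermediate_field(1)[OF subfield_axioms \<alpha>]]
    unfolding r_K_def L by simp
  ultimately show "\<exists>M. finite_ext Kbar K M \<and> rho_K Kbar K \<alpha> M = a * r_K Kbar K \<alpha> L"
    by blast
qed

end
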